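(* Let $m\ge1$ be an integer and $\mathcal S'=\{x_0,x_1,x_2,\ldots,x_m\}$, with corresponding restricted right-arm rotation distance $d_{RRA}^{\mathcal S'}$ (rotations allowed at all right-arm nodes at levels $0,1,\ldots,m$). Then for every integer $n>m+4$ there exist finite rooted binary trees $T_1,T_2$, each with $n$ nodes, such that $d_{RRA}^{\mathcal S'}(T_1,T_2)$ is defined and $d_{RRA}^{\mathcal S'}(T_1,T_2)\ge 4n-4m-4$.
   Context: Trees: finite rooted binary trees, each internal vertex (node) having a left and a right child. The right arm consists of the root and all nodes reachable from the root by a path of right edges; the level of a node is its distance from the root. Right rotation at a node $N$ whose left child $M$ is a node (with $A,B$ the subtrees of $M$, $C$ the right subtree of $N$) replaces the subtree at $N$ by one whose root has left subtree $A$ and right child a node with left subtree $B$ and right subtree $C$; left rotation at $N$ is the inverse. Rotations preserve the number of nodes. $d_{RRA}^{\mathcal S'}(T_1,T_2)$ is the minimal number of rotations, each at a right-arm node at one of the levels $0,1,\ldots,m$, required to transform $T_1$ into $T_2$; it is defined when such a sequence exists. *)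

theory Defs
  imports Main
begin

datatype tree = Leaf | Node tree tree

fun nodes :: "tree \<Rightarrow> nat" where
  "nodes Leaf = 0"
| "nodes (Node l r) = Suc (nodes l + nodes r)"

fun rot_right :: "tree \<Rightarrow> tree option" where
  "rot_right (Node (Node A B) C) = Some (Node A (Node B C))"
| "rot_right _ = None"

fun rot_left :: "tree \<Rightarrow> tree option" where
  "rot_left (Node A (Node B C)) = Some (Node (Node A B) C)"
| "rot_left _ = None"

fun at_arm :: "nat \<Rightarrow> (tree \<Rightarrow> tree option) \<Rightarrow> tree \<Rightarrow> tree option" where
  "at_arm 0 f t = f t"
| "at_arm (Suc k) f Leaf = None"
| "at_arm (Suc k) f (Node l r) = map_option (Node l) (at_arm k f r)"

definition rra_step :: "nat \<Rightarrow> tree \<Rightarrow> tree \<Rightarrow> bool" where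
  "rra_step m t t' \<longleftrightarrow> (\<exists>k\<le>m. at_arm k rot_right t = Some t' \<or> at_arm k rot_left t = Some t')"

definition rra_defined :: "nat \<Rightarrow> tree \<Rightarrow> tree \<Rightarrow> bool" where
  "rra_defined m t1 t2 \<longleftrightarrow> (\<exists>j. (rra_step m ^^ j) t1 t2)"

definition rra_dist :: "nat \<Rightarrow> tree \<Rightarrow> tree \<Rightarrow> nat" where
  "rra_dist m t1 t2 = (LEAST j. (rra_step m ^^ j) t1 t2)"

end

theory Submission
  imports Defs
begin

text \<open>
  Rotations preserve the inorder sequence of nodes, so a node can be tracked along a rotation
  sequence by its inorder position. A rotation at an arm node moves exactly one node onto or off
  the right arm, and a node that stays off the arm keeps its subtree. Take for \<open>T\<^sub>1\<close> a root whose left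
  subtree is a right vine of \<open>n - 1\<close> nodes, and for \<open>T\<^sub>2\<close> a root whose left child has as left
  subtree a right vine of \<open>n - 2\<close> nodes. Each of the first \<open>n - 1\<close> nodes is off the arm in both
  trees but has different subtrees there, so it must enter and leave the arm, an even and positive
  number of moves. The nodes moving exactly twice are on the arm during intervals which pairwise
  overlap and are ordered by their entry times, so when the last of them enters, all the others
  lie above it on the arm; as it enters at level at most \<open>m\<close>, there are at most \<open>m + 1\<close> of them.
  Hence the distance is at least \<open>4 (n - 1) - 2 (m + 1) \<ge> 4 n - 4 m - 4\<close>.
\<close>

section \<open>Inorder positions and the right arm\<close>

text \<open>Nodes are addressed by their 0-based inorder position, which rotations preserve.\<close>

fun on_arm :: "tree \<Rightarrow> nat \<Rightarrow> bool" where
  "on_arm Leaf i = False"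
| "on_arm (Node l r) i \<longleftrightarrow> i = nodes l \<or> (nodes l < i \<and> on_arm r (i - Suc (nodes l)))"

fun subtree_at :: "tree \<Rightarrow> nat \<Rightarrow> tree" where
  "subtree_at Leaf i = Leaf"
| "subtree_at (Node l r) i =
     (if i < nodes l then subtree_at l i else if i = nodes l then Node l r
      else subtree_at r (i - Suc (nodes l)))"

text \<open>For a node on the arm this is its level.\<close>

definition arm_rank :: "tree \<Rightarrow> nat \<Rightarrow> nat" where
  "arm_rank t i = card {y. y < i \<and> on_arm t y}"

lemma on_arm_Node_shift: "on_arm (Node l r) (i + Suc (nodes l)) = on_arm r i"
  by simp

lemma arm_rank_Node_left: "i \<le> nodes l \<Longrightarrow> arm_rank (Node l r) i = 0"
  unfolding arm_rank_def by auto

lemma arm_rank_Node_shift: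
  "arm_rank (Node l r) (i + Suc (nodes l)) = Suc (arm_rank r i)"
proof -
  have eq: "{y. y < i + Suc (nodes l) \<and> on_arm (Node l r) y}
        = insert (nodes l) ((\<lambda>y. y + Suc (nodes l)) ` {y. y < i \<and> on_arm r y})"
    (is "?L = ?R")
  proof (intro equalityI subsetI)
    fix y assume "y \<in> ?L"
    then show "y \<in> ?R"
      by (cases "y = nodes l") (auto simp: image_iff intro!: exI[of _ "y - Suc (nodes l)"])
  qed auto
  have "card ?R = Suc (card {y. y < i \<and> on_arm r y})"
    by (subst card_insert_disjoint) (auto simp: card_image inj_on_def)
  then show ?thesis
    unfolding arm_rank_def eq .
qed

lemma subtree_at_Node_bound: "subtree_at t i = Node l r \<Longrightarrow> i + nodes r < nodes t"
  by (induction t arbitrary: i) (fastforce split: if_splits)+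

lemma not_on_arm_right_descendant:
  "subtree_at t x = Node l r \<Longrightarrow> \<not> on_arm t x \<Longrightarrow> x < y \<Longrightarrow> y \<le> x + nodes r \<Longrightarrow> \<not> on_arm t y"
proof (induction t arbitrary: x y)
  case Leaf
  then show ?case by simp
next
  case (Node L R)
  show ?case
  proof (cases "x < nodes L")
    case True
    with Node.prems have "y < nodes L"
      using subtree_at_Node_bound[of L x l r] by simp
    then show ?thesis by simp
  next
    case False
    with Node.prems have "nodes L < x" by (auto split: if_splits)
    then show ?thesis
      using Node.prems Node.IH(2)[of "x - Suc (nodes L)" "y - Suc (nodes L)"] by auto
  qed
qed

section \<open>Rotations at right-arm nodes\<close>

text \<open>
  In the tree
  where the moving node \<open>c\<close> is off the arm, \<open>c + nodes r + 1\<close> is its parent, an arm node.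
\<close>

definition arm_move :: "nat \<Rightarrow> tree \<Rightarrow> tree \<Rightarrow> bool" where
  "arm_move k t t' \<longleftrightarrow> nodes t' = nodes t \<and>
     (\<exists>c<nodes t. (\<forall>i. on_arm t i \<noteq> on_arm t' i \<longleftrightarrow> i = c)
        \<and> arm_rank t c \<le> k \<and> arm_rank t' c \<le> k
        \<and> (\<forall>u\<in>{t, t'}. \<forall>l r. \<not> on_arm u c \<longrightarrow> subtree_at u c = Node l r
              \<longrightarrow> on_arm u (c + nodes r + 1)))
   \<and> (\<forall>i. \<not> on_arm t i \<longrightarrow> \<not> on_arm t' i \<longrightarrow> subtree_at t' i = subtree_at t i)"

lemma arm_move_sym: "arm_move k t t' \<Longrightarrow> arm_move k t' t"
proof -
  assume "arm_move k t t'"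
  then obtain c where "c < nodes t" "nodes t' = nodes t"
    "\<forall>i. on_arm t i \<noteq> on_arm t' i \<longleftrightarrow> i = c" "arm_rank t c \<le> k" "arm_rank t' c \<le> k"
    "\<forall>u\<in>{t, t'}. \<forall>l r. \<not> on_arm u c \<longrightarrow> subtree_at u c = Node l r \<longrightarrow> on_arm u (c + nodes r + 1)"
    "\<forall>i. \<not> on_arm t i \<longrightarrow> \<not> on_arm t' i \<longrightarrow> subtree_at t' i = subtree_at t i"
    unfolding arm_move_def by blast
  then show ?thesis
    unfolding arm_move_def by (intro conjI exI[of _ c]) auto
qed

lemma arm_move_mono: "arm_move k t t' \<Longrightarrow> k \<le> k' \<Longrightarrow> arm_move k' t t'"
  unfolding arm_move_def by (meson order_trans)

lemma arm_move_rot_right: "rot_right t = Some t' \<Longrightarrow> arm_move 0 t t'"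
proof -
  assume "rot_right t = Some t'"
  then obtain A B C where t: "t = Node (Node A B) C" and t': "t' = Node A (Node B C)"
    by (cases t rule: rot_right.cases) auto
  have moved: "\<exists>c<nodes t. (\<forall>i. on_arm t i \<noteq> on_arm t' i \<longleftrightarrow> i = c)
        \<and> arm_rank t c \<le> 0 \<and> arm_rank t' c \<le> 0
        \<and> (\<forall>u\<in>{t, t'}. \<forall>l r. \<not> on_arm u c \<longrightarrow> subtree_at u c = Node l r
              \<longrightarrow> on_arm u (c + nodes r + 1))"
    unfolding t t' by (intro exI[of _ "nodes A"]) (auto simp: arm_rank_Node_left)
  have "subtree_at t' i = subtree_at t i" if "\<not> on_arm t i" "\<not> on_arm t' i" for i
  proof -
    consider "i < nodes A" | "i = nodes A" | "nodes A < i" "i < nodes A + Suc (nodes B)"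
      | "i = nodes A + Suc (nodes B)" | "nodes A + Suc (nodes B) < i"
      by linarith
    then show ?thesis
      using that unfolding t t' by cases (auto simp: Suc_diff_Suc)
  qed
  with moved show ?thesis
    unfolding arm_move_def t t' by auto
qed

lemma rot_left_iff_rot_right: "rot_left t' = Some t \<longleftrightarrow> rot_right t = Some t'"
  by (cases t rule: rot_right.cases; cases t' rule: rot_left.cases) auto

lemma arm_move_rot_left: "rot_left t = Some t' \<Longrightarrow> arm_move 0 t t'"
  by (metis arm_move_rot_right arm_move_sym rot_left_iff_rot_right)

lemma arm_move_Node: "arm_move k r r' \<Longrightarrow> arm_move (Suc k) (Node l r) (Node l r')"
proof -
  assume "arm_move k r r'"
  then obtain c where c: "c < nodes r" "nodes r' = nodes r"
    "\<forall>i. on_arm r i \<noteq> on_arm r' i \<longleftrightarrow> i = c" "arm_rank r c \<le> k" "arm_rank r' c \<le> k"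
    and parent: "\<forall>u\<in>{r, r'}. \<forall>la ra. \<not> on_arm u c \<longrightarrow> subtree_at u c = Node la ra
                    \<longrightarrow> on_arm u (c + nodes ra + 1)"
    and frozen: "\<forall>i. \<not> on_arm r i \<longrightarrow> \<not> on_arm r' i \<longrightarrow> subtree_at r' i = subtree_at r i"
    unfolding arm_move_def by blast
  define c' where "c' = c + Suc (nodes l)"
  have "on_arm (Node l r) i \<noteq> on_arm (Node l r') i \<longleftrightarrow> i = c'" for i
    using c(3)[rule_format, of "i - Suc (nodes l)"] unfolding c'_def by auto
  moreover have "\<forall>u\<in>{Node l r, Node l r'}. \<forall>la ra. \<not> on_arm u c' \<longrightarrow>
      subtree_at u c' = Node la ra \<longrightarrow> on_arm u (c' + nodes ra + 1)"
  proof (intro ballI allI impI)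
    fix u la ra
    assume "u \<in> {Node l r, Node l r'}" "\<not> on_arm u c'" "subtree_at u c' = Node la ra"
    then obtain v where v: "u = Node l v" "v \<in> {r, r'}" "\<not> on_arm v c" "subtree_at v c = Node la ra"
      unfolding c'_def by auto
    have "c' + nodes ra + 1 = (c + nodes ra + 1) + Suc (nodes l)"
      unfolding c'_def by simp
    then show "on_arm u (c' + nodes ra + 1)"
      using parent v by (simp only: on_arm_Node_shift) blast
  qed
  moreover have "subtree_at (Node l r') i = subtree_at (Node l r) i"
    if "\<not> on_arm (Node l r) i" "\<not> on_arm (Node l r') i" for i
    using that frozen by auto
  moreover have "c' < nodes (Node l r)" "arm_rank (Node l r) c' \<le> Suc k"
    "arm_rank (Node l r') c' \<le> Suc k"
    using c unfolding c'_def by (simp_all only: arm_rank_Node_shift) simp_all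
  ultimately show ?thesis
    using c(2) unfolding arm_move_def by auto
qed

lemma arm_move_at_arm:
  assumes "at_arm k f t = Some t'" and "f = rot_right \<or> f = rot_left"
  shows "arm_move k t t'"
  using assms(1)
proof (induction k arbitrary: t t')
  case 0
  then show ?case using assms(2) arm_move_rot_right arm_move_rot_left by auto
next
  case (Suc k)
  then obtain l r r' where "t = Node l r" "at_arm k f r = Some r'" "t' = Node l r'"
    by (cases t) auto
  then show ?case using Suc.IH arm_move_Node by blast
qed

lemma rra_step_arm_move: "rra_step m t t' \<Longrightarrow> arm_move m t t'"
  unfolding rra_step_def using arm_move_at_arm arm_move_mono by blast

section \<open>Connectivity\<close>

fun vine :: "nat \<Rightarrow> tree" where
  "vine 0 = Leaf"
| "vine (Suc k) = Node Leaf (vine k)"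

lemma nodes_vine [simp]: "nodes (vine k) = k"
  by (induction k) auto

lemma at_arm_rot_left_iff_rot_right:
  "at_arm k rot_left t' = Some t \<longleftrightarrow> at_arm k rot_right t = Some t'"
proof (induction k arbitrary: t t')
  case 0
  then show ?case by (simp add: rot_left_iff_rot_right)
next
  case (Suc k)
  then show ?case by (cases t; cases t') auto
qed

lemma rra_step_sym: "rra_step m t t' \<Longrightarrow> rra_step m t' t"
  unfolding rra_step_def using at_arm_rot_left_iff_rot_right by blast

lemma rra_step_mono: "m \<le> m' \<Longrightarrow> rra_step m \<le> rra_step m'"
  unfolding rra_step_def by (auto intro: order_trans)

text \<open>Conjugating with a root rotation lowers the level of the rotated node by one.\<close>

lemma at_arm_rotation_rra_step_1:
  assumes "f = rot_right \<or> f = rot_left"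
  shows "at_arm k f t = Some t' \<Longrightarrow> (rra_step 1)\<^sup>*\<^sup>* t t'"
proof (induction k arbitrary: t t')
  case 0
  then have "rra_step 1 t t'"
    using assms unfolding rra_step_def by auto
  then show ?case by simp
next
  case (Suc k)
  show ?case
  proof (cases k)
    case 0
    then have "rra_step 1 t t'"
      using assms Suc.prems unfolding rra_step_def by (intro exI[of _ 1]) auto
    then show ?thesis by simp
  next
    case (Suc k')
    with Suc.prems obtain l0 r r' where "t = Node l0 r" "t' = Node l0 r'"
      and "at_arm (Suc k') f r = Some r'"
      by (cases t) auto
    then obtain l1 r1 r1' where t: "t = Node l0 (Node l1 r1)"
      and t': "t' = Node l0 (Node l1 r1')" and r1: "at_arm k' f r1 = Some r1'"
      by (cases r) auto
    let ?u = "Node (Node l0 l1) r1" and ?u' = "Node (Node l0 l1) r1'"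
    have "rra_step 1 t ?u" and "rra_step 1 ?u' t'"
      unfolding rra_step_def t t' by (auto intro!: exI[of _ 0])
    moreover have "(rra_step 1)\<^sup>*\<^sup>* ?u ?u'"
      using Suc.IH r1 \<open>k = Suc k'\<close> by simp
    ultimately show ?thesis
      by (meson converse_rtranclp_into_rtranclp rtranclp.rtrancl_into_rtrancl)
  qed
qed

lemma rra_step_1_Node: "(rra_step 1)\<^sup>*\<^sup>* r r' \<Longrightarrow> (rra_step 1)\<^sup>*\<^sup>* (Node l r) (Node l r')"
proof (induction rule: rtranclp_induct)
  case (step r' r'')
  then obtain k f where "f = rot_right \<or> f = rot_left" "at_arm k f r' = Some r''"
    unfolding rra_step_def by blast
  then have "(rra_step 1)\<^sup>*\<^sup>* (Node l r') (Node l r'')"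
    using at_arm_rotation_rra_step_1[of f "Suc k"] by simp
  with step.IH show ?case by simp
qed simp

lemma rra_step_1_Node_vine: "(rra_step 1)\<^sup>*\<^sup>* (Node l (vine j)) (vine (nodes l + j + 1))"
proof (induction l arbitrary: j)
  case (Node A B)
  have "rra_step 1 (Node (Node A B) (vine j)) (Node A (Node B (vine j)))"
    unfolding rra_step_def by (intro exI[of _ 0]) simp
  moreover have "(rra_step 1)\<^sup>*\<^sup>* (Node A (Node B (vine j))) (Node A (vine (nodes B + j + 1)))"
    using rra_step_1_Node Node.IH(2) by blast
  moreover have "(rra_step 1)\<^sup>*\<^sup>* (Node A (vine (nodes B + j + 1))) (vine (nodes (Node A B) + j + 1))"
    using Node.IH(1)[of "nodes B + j + 1"] by (simp add: algebra_simps)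
  ultimately show ?case
    by (meson converse_rtranclp_into_rtranclp rtranclp_trans)
qed simp

lemma rra_step_1_to_vine: "(rra_step 1)\<^sup>*\<^sup>* t (vine (nodes t))"
proof (induction t)
  case (Node l r)
  then have "(rra_step 1)\<^sup>*\<^sup>* (Node l r) (Node l (vine (nodes r)))"
    using rra_step_1_Node by blast
  with rra_step_1_Node_vine show ?case
    by (metis nodes.simps(2) Suc_eq_plus1 rtranclp_trans)
qed simp

lemma rra_defined_if_nodes_eq:
  assumes "1 \<le> m" and "nodes t = nodes t'"
  shows "rra_defined m t t'"
proof -
  have to_vine: "(rra_step m)\<^sup>*\<^sup>* u (vine (nodes u))" for u
    using rra_step_1_to_vine rtranclp_mono[OF rra_step_mono[OF assms(1)]] by blast
  have "symp (rra_step m)"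
    using rra_step_sym by (rule sympI)
  then have "(rra_step m)\<^sup>*\<^sup>* (vine (nodes t')) t'"
    using to_vine symp_rtranclp by (metis sympD)
  with to_vine[of t] assms(2) have "(rra_step m)\<^sup>*\<^sup>* t t'"
    by simp
  then show ?thesis
    unfolding rra_defined_def by (rule rtranclp_imp_relpowp)
qed

section \<open>Counting arm moves\<close>

definition switch_times :: "(nat \<Rightarrow> bool) \<Rightarrow> nat \<Rightarrow> nat set" where
  "switch_times g J = {i. i < J \<and> g i \<noteq> g (Suc i)}"

lemma switch_times_Suc:
  "switch_times g (Suc J) = (if g J = g (Suc J) then switch_times g J else insert J (switch_times g J))"
  unfolding switch_times_def by (auto simp: less_Suc_eq)

lemma odd_card_switch_times: "\<not> g 0 \<Longrightarrow> g J \<longleftrightarrow> odd (card (switch_times g J))"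
proof (induction J)
  case (Suc J)
  have "finite (switch_times g J)" "J \<notin> switch_times g J"
    unfolding switch_times_def by auto
  with Suc show ?case
    by (auto simp: switch_times_Suc)
qed (simp add: switch_times_def)

lemma switch_times_prefix: "i \<le> J \<Longrightarrow> switch_times g i = switch_times g J \<inter> {..<i}"
  unfolding switch_times_def by auto

lemma constant_if_switch_times_empty: "switch_times g J = {} \<Longrightarrow> i \<le> J \<Longrightarrow> g i = g 0"
  by (induction i) (auto simp: switch_times_def)

lemma switch_times_two:
  assumes "\<not> g 0" and "switch_times g J = {a, b}" and "a < b" and "i \<le> J"
  shows "g i \<longleftrightarrow> a < i \<and> i \<le> b"
proof -
  have "switch_times g i = {a, b} \<inter> {..<i}"
    using switch_times_prefix assms(2,4) by metis
  moreover have "card ({a, b} \<inter> {..<i}) = (if i \<le> a then 0 else if i \<le> b then 1 else 2)"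
    using \<open>a < b\<close> by (auto simp: Int_insert_left)
  ultimately show ?thesis
    using odd_card_switch_times[of g i] assms(1,3) by auto
qed

lemma sum_card_fibres:
  fixes n J :: nat
  assumes "\<And>i. i < J \<Longrightarrow> \<exists>c<n. \<forall>x. R i x \<longleftrightarrow> x = c"
  shows "(\<Sum>x<n. card {i. i < J \<and> R i x}) = J"
proof -
  have "(\<Sum>x<n. card {i. i < J \<and> R i x}) = (\<Sum>x<n. \<Sum>i<J. if R i x then 1 else 0)"
    by (simp add: sum.If_cases Int_def conj_commute)
  also have "\<dots> = (\<Sum>i<J. \<Sum>x<n. if R i x then 1 else 0)"
    by (rule sum.swap)
  also have "\<dots> = (\<Sum>i<J. 1)"
  proof (rule sum.cong)
    fix i
    assume "i \<in> {..<J}"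
    then obtain c where "c < n" and "\<And>x. R i x \<longleftrightarrow> x = c"
      using assms by blast
    then show "(\<Sum>x<n. if R i x then 1 else 0) = (1::nat)"
      by simp
  qed simp
  finally show ?thesis by simp
qed

lemma sum_lower_bound_with_exceptions:
  fixes f :: "nat \<Rightarrow> nat"
  assumes "\<And>x. x < N \<Longrightarrow> a \<le> f x" and "\<And>x. x < N \<Longrightarrow> \<not> P x \<Longrightarrow> a + d \<le> f x"
  shows "(a + d) * N \<le> (\<Sum>x<N. f x) + d * card {x. x < N \<and> P x}"
  using assms
proof (induction N)
  case (Suc N)
  then have IH: "(a + d) * N \<le> (\<Sum>x<N. f x) + d * card {x. x < N \<and> P x}"
    by simp
  show ?case
  proof (cases "P N")
    case True
    then have "{x. x < Suc N \<and> P x} = insert N {x. x < N \<and> P x}"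
      by (auto simp: less_Suc_eq)
    moreover have "a \<le> f N"
      using Suc.prems by simp
    ultimately show ?thesis
      using IH by (simp add: algebra_simps)
  next
    case False
    then have "{x. x < Suc N \<and> P x} = {x. x < N \<and> P x}"
      by (auto simp: less_Suc_eq)
    moreover have "a + d \<le> f N"
      using Suc.prems False by simp
    ultimately show ?thesis
      using IH by (simp add: algebra_simps)
  qed
qed simp

lemma card_2_ordered:
  fixes S :: "'a::linorder set"
  assumes "card S = 2"
  obtains a b where "a < b" and "S = {a, b}"
proof -
  from assms obtain a b where "S = {a, b}" "a \<noteq> b"
    unfolding card_2_iff by blast
  then show thesis
  proof (cases "a < b")
    case False
    with \<open>a \<noteq> b\<close> have "b < a" by simp
    then show thesis
      using that[of b a] \<open>S = {a, b}\<close> by (simp add: insert_commute)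
  qed (use that in blast)
qed

definition hooked_vine :: "nat \<Rightarrow> tree" where
  "hooked_vine n = Node (vine (n - 1)) Leaf"

definition double_hooked_vine :: "nat \<Rightarrow> tree" where
  "double_hooked_vine n = Node (Node (vine (n - 2)) Leaf) Leaf"

lemma nodes_hooked_vine: "1 \<le> n \<Longrightarrow> nodes (hooked_vine n) = n"
  unfolding hooked_vine_def by simp

lemma nodes_double_hooked_vine: "2 \<le> n \<Longrightarrow> nodes (double_hooked_vine n) = n"
  unfolding double_hooked_vine_def by simp

lemma subtree_at_vine: "x < k \<Longrightarrow> subtree_at (vine k) x = Node Leaf (vine (k - Suc x))"
  by (induction k arbitrary: x) (auto simp: less_Suc_eq_0_disj)

lemma hooked_vine_below_root:
  "x \<le> n - 2 \<Longrightarrow> 2 \<le> n \<Longrightarrow>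
     \<not> on_arm (hooked_vine n) x \<and> subtree_at (hooked_vine n) x = Node Leaf (vine (n - 2 - x))"
  unfolding hooked_vine_def using subtree_at_vine[of x "n - 1"] by (auto simp: numeral_eq_Suc)

lemma double_hooked_vine_below_root:
  "x \<le> n - 3 \<Longrightarrow> 3 \<le> n \<Longrightarrow>
     \<not> on_arm (double_hooked_vine n) x
     \<and> subtree_at (double_hooked_vine n) x = Node Leaf (vine (n - 3 - x))"
  unfolding double_hooked_vine_def using subtree_at_vine[of x "n - 2"] by (auto simp: numeral_eq_Suc)

lemma double_hooked_vine_left_child:
  "2 \<le> n \<Longrightarrow> \<not> on_arm (double_hooked_vine n) (n - 2)
     \<and> subtree_at (double_hooked_vine n) (n - 2) = Node (vine (n - 2)) Leaf"
  unfolding double_hooked_vine_def by simp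

lemma subtree_at_hooked_vines_differ:
  assumes "x \<le> n - 2" and "3 \<le> n"
  shows "subtree_at (double_hooked_vine n) x \<noteq> subtree_at (hooked_vine n) x"
proof -
  have start: "nodes (subtree_at (hooked_vine n) x) = n - 1 - x"
    using hooked_vine_below_root[OF assms(1)] assms by simp
  consider "x \<le> n - 3" | "x = n - 2"
    using assms by linarith
  then show ?thesis
  proof cases
    case 1
    then have "nodes (subtree_at (double_hooked_vine n) x) = n - 2 - x"
      using double_hooked_vine_below_root assms(2) by simp
    then show ?thesis using start 1 assms(2) by auto
  next
    case 2
    then have "nodes (subtree_at (double_hooked_vine n) x) = n - 1"
      using double_hooked_vine_left_child assms(2) by simp
    then show ?thesis using start 2 assms(2) by auto
  qed
qed

locale rotation_path =
  fixes m n J :: nat and p :: "nat \<Rightarrow> tree"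
  assumes arm_move_path: "\<And>i. i < J \<Longrightarrow> arm_move m (p i) (p (Suc i))"
    and path_start: "p 0 = hooked_vine n"
    and path_end: "p J = double_hooked_vine n"
    and three_le_n: "3 \<le> n"
begin

definition arm_moves :: "nat \<Rightarrow> nat set" where
  "arm_moves x = switch_times (\<lambda>i. on_arm (p i) x) J"

lemma arm_moves_iff: "i \<in> arm_moves x \<longleftrightarrow> i < J \<and> on_arm (p i) x \<noteq> on_arm (p (Suc i)) x"
  unfolding arm_moves_def switch_times_def by simp

lemma arm_moves_less_J: "i \<in> arm_moves x \<Longrightarrow> i < J"
  by (simp add: arm_moves_iff)

lemma nodes_path: "i \<le> J \<Longrightarrow> nodes (p i) = n"
proof (induction i)
  case 0
  then show ?case using path_start nodes_hooked_vine three_le_n by simp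
next
  case (Suc i)
  then show ?case using arm_move_path[of i] unfolding arm_move_def by simp
qed

lemma unique_mover:
  assumes "i < J"
  shows "\<exists>c<n. \<forall>x. i \<in> arm_moves x \<longleftrightarrow> x = c"
proof -
  from arm_move_path[OF assms] obtain c where
    "c < nodes (p i)" and "\<forall>x. on_arm (p i) x \<noteq> on_arm (p (Suc i)) x \<longleftrightarrow> x = c"
    unfolding arm_move_def by blast
  with assms nodes_path[of i] show ?thesis
    unfolding arm_moves_iff by auto
qed

lemma arm_moves_disjoint:
  assumes "x \<noteq> y"
  shows "arm_moves x \<inter> arm_moves y = {}"
proof (rule equals0I)
  fix i
  assume i: "i \<in> arm_moves x \<inter> arm_moves y"
  then have "i < J" by (simp add: arm_moves_iff)
  then obtain c where "\<forall>z. i \<in> arm_moves z \<longleftrightarrow> z = c"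
    using unique_mover by blast
  with i assms show False by auto
qed

lemma moving_node_rank_and_parent:
  assumes "i \<in> arm_moves x"
  shows "arm_rank (p (Suc i)) x \<le> m"
    and "\<not> on_arm (p (Suc i)) x \<Longrightarrow> subtree_at (p (Suc i)) x = Node l r
           \<Longrightarrow> on_arm (p (Suc i)) (x + nodes r + 1)"
proof -
  from assms have "i < J" and moved: "on_arm (p i) x \<noteq> on_arm (p (Suc i)) x"
    by (simp_all add: arm_moves_iff)
  from arm_move_path[OF \<open>i < J\<close>] obtain c where
    "\<forall>j. on_arm (p i) j \<noteq> on_arm (p (Suc i)) j \<longleftrightarrow> j = c" and "arm_rank (p (Suc i)) c \<le> m"
    and "\<forall>u\<in>{p i, p (Suc i)}. \<forall>l r. \<not> on_arm u c \<longrightarrow> subtree_at u c = Node l r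
           \<longrightarrow> on_arm u (c + nodes r + 1)"
    unfolding arm_move_def by blast
  moreover from this(1) moved have "x = c"
    by blast
  ultimately show "arm_rank (p (Suc i)) x \<le> m"
    and "\<not> on_arm (p (Suc i)) x \<Longrightarrow> subtree_at (p (Suc i)) x = Node l r
           \<Longrightarrow> on_arm (p (Suc i)) (x + nodes r + 1)"
    by blast+
qed

lemma subtree_at_frozen:
  assumes "u \<le> v" and "v \<le> J" and "\<And>i. u \<le> i \<Longrightarrow> i \<le> v \<Longrightarrow> \<not> on_arm (p i) x"
  shows "subtree_at (p v) x = subtree_at (p u) x"
  using assms
proof (induction v rule: dec_induct)
  case (step v)
  then show ?case
    using arm_move_path[of v] unfolding arm_move_def by simp
qed simp

lemma length_eq_sum_arm_moves: "J = (\<Sum>x<n. card (arm_moves x))"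
proof -
  have "arm_moves x = {i. i < J \<and> i \<in> arm_moves x}" for x
    using arm_moves_iff by blast
  then show ?thesis
    using sum_card_fibres[of J n "\<lambda>i x. i \<in> arm_moves x"] unique_mover by simp
qed

lemma off_arm_at_ends:
  assumes "x \<le> n - 2"
  shows "\<not> on_arm (p 0) x" and "\<not> on_arm (p J) x"
proof -
  show "\<not> on_arm (p 0) x"
    using hooked_vine_below_root[OF assms] three_le_n path_start by simp
  consider "x \<le> n - 3" | "x = n - 2"
    using assms by linarith
  then show "\<not> on_arm (p J) x"
    using double_hooked_vine_below_root[of x n] double_hooked_vine_left_child[of n]
      three_le_n path_end by cases simp_all
qed

lemma even_card_arm_moves: "x \<le> n - 2 \<Longrightarrow> even (card (arm_moves x))"
  using odd_card_switch_times[of "\<lambda>i. on_arm (p i) x" J] off_arm_at_ends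
  unfolding arm_moves_def by simp

lemma arm_moves_nonempty:
  assumes "x \<le> n - 2"
  shows "arm_moves x \<noteq> {}"
proof
  assume "arm_moves x = {}"
  then have "\<not> on_arm (p i) x" if "i \<le> J" for i
    using constant_if_switch_times_empty[of "\<lambda>i. on_arm (p i) x"] off_arm_at_ends[OF assms] that
    unfolding arm_moves_def by blast
  then have "subtree_at (p J) x = subtree_at (p 0) x"
    using subtree_at_frozen[of 0 J] by blast
  then show False
    using subtree_at_hooked_vines_differ[OF assms three_le_n] path_start path_end by simp
qed

lemma on_arm_between_moves:
  assumes "x \<le> n - 2" and "arm_moves x = {a, b}" and "a < b" and "i \<le> J"
  shows "on_arm (p i) x \<longleftrightarrow> a < i \<and> i \<le> b"
  by (rule switch_times_two[of "\<lambda>i. on_arm (p i) x"])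
    (use off_arm_at_ends[OF assms(1)] assms(2-) in \<open>simp_all add: arm_moves_def\<close>)

lemma enters_in_order:
  assumes "x < y" and "y \<le> n - 2"
    and x: "arm_moves x = {a, b}" "a < b" and y: "arm_moves y = {a', b'}" "a' < b'"
  shows "a < a'"
proof -
  have "x \<le> n - 2" and "b < J"
    using assms arm_moves_less_J[of b x] by auto
  have before: "\<not> on_arm (p i) y" if "i \<le> a" for i
  proof -
    have "\<not> on_arm (p j) x" if "j \<le> i" for j
      using on_arm_between_moves[OF \<open>x \<le> n - 2\<close> x, of j] that \<open>i \<le> a\<close> \<open>b < J\<close> x(2)
      by simp
    then have "subtree_at (p i) x = Node Leaf (vine (n - 2 - x))"
      using subtree_at_frozen[of 0 i x] hooked_vine_below_root[OF \<open>x \<le> n - 2\<close>]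
        path_start three_le_n \<open>i \<le> a\<close> x(2) \<open>b < J\<close> by simp
    moreover have "\<not> on_arm (p i) x"
      using \<open>\<And>j. j \<le> i \<Longrightarrow> \<not> on_arm (p j) x\<close> by blast
    ultimately show ?thesis
      using not_on_arm_right_descendant \<open>x < y\<close> \<open>y \<le> n - 2\<close> by simp
  qed
  have "a \<notin> arm_moves y"
    using arm_moves_disjoint[of x y] x(1) \<open>x < y\<close> by auto
  then have "\<not> on_arm (p (Suc a)) y"
    using before[of a] x(2) \<open>b < J\<close> unfolding arm_moves_iff by auto
  moreover have "on_arm (p (Suc a')) y"
    using on_arm_between_moves[OF \<open>y \<le> n - 2\<close> y, of "Suc a'"] y(2) arm_moves_less_J[of b' y] y(1)
    by simp
  ultimately have "\<not> Suc a' \<le> a" and "a' \<noteq> a"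
    using before[of "Suc a'"] by auto
  then show ?thesis by simp
qed

lemma after_leaving:
  assumes "x \<le> n - 3" and x: "arm_moves x = {a, b}" "a < b" and "b < i" "i \<le> J"
  shows "\<not> on_arm (p i) x" and "subtree_at (p i) x = Node Leaf (vine (n - 3 - x))"
proof -
  have x2: "x \<le> n - 2" using assms(1) by simp
  have off: "\<not> on_arm (p j) x" if "i \<le> j" "j \<le> J" for j
    using on_arm_between_moves[OF x2 x, of j] that \<open>b < i\<close> by simp
  then show "\<not> on_arm (p i) x"
    using \<open>i \<le> J\<close> by simp
  have "subtree_at (p J) x = subtree_at (p i) x"
    using subtree_at_frozen[of i J x] off \<open>i \<le> J\<close> by simp
  then show "subtree_at (p i) x = Node Leaf (vine (n - 3 - x))"
    using double_hooked_vine_below_root[OF assms(1) three_le_n] path_end by simp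
qed

lemma enters_before_leaving:
  assumes "x < y" and "y \<le> n - 2"
    and x: "arm_moves x = {a, b}" "a < b" and y: "arm_moves y = {a', b'}" "a' < b'"
  shows "a' < b"
proof -
  have "x \<le> n - 3" and "b < J" "b' < J"
    using assms arm_moves_less_J[of b x] arm_moves_less_J[of b' y] by auto
  have on_y: "on_arm (p i) y \<longleftrightarrow> a' < i \<and> i \<le> b'" if "i \<le> J" for i
    using on_arm_between_moves[OF \<open>y \<le> n - 2\<close> y that] .
  consider "y \<le> n - 3" | "y = n - 2"
    using \<open>y \<le> n - 2\<close> by linarith
  then show ?thesis
  proof cases
    case 1
    have "\<not> on_arm (p i) y" if "b < i" "i \<le> J" for i
      using after_leaving[OF \<open>x \<le> n - 3\<close> x that] not_on_arm_right_descendant \<open>x < y\<close> 1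
      by simp
    moreover have "on_arm (p (Suc a')) y"
      using on_y[of "Suc a'"] y(2) \<open>b' < J\<close> by simp
    ultimately have "\<not> b < Suc a'"
      using y(2) \<open>b' < J\<close> by auto
    then show ?thesis by simp
  next
    case 2
    have "b \<in> arm_moves x" using x(1) by simp
    then have "on_arm (p (Suc b)) (x + nodes (vine (n - 3 - x)) + 1)"
      using after_leaving[OF \<open>x \<le> n - 3\<close> x, of "Suc b"] \<open>b < J\<close>
      by (intro moving_node_rank_and_parent(2)) auto
    moreover have "x + nodes (vine (n - 3 - x)) + 1 = y"
      using \<open>x \<le> n - 3\<close> 2 three_le_n by simp
    ultimately have "on_arm (p (Suc b)) y"
      by simp
    then have "a' \<le> b"
      using on_y[of "Suc b"] \<open>b < J\<close> by simp
    moreover have "a' \<noteq> b"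
      using arm_moves_disjoint[of x y] x(1) y(1) \<open>x < y\<close> by auto
    ultimately show ?thesis by simp
  qed
qed

text \<open>
  By the two previous lemmas, every other node moving twice is on the arm when the largest one
  enters it.
\<close>

lemma card_arm_moves_two_le: "card {x. x < n - 1 \<and> card (arm_moves x) = 2} \<le> m + 1"
proof -
  define D where "D = {x. x < n - 1 \<and> card (arm_moves x) = 2}"
  have "finite D" unfolding D_def by simp
  show "card D \<le> m + 1"
  proof (cases "D = {}")
    case False
    define z where "z = Max D"
    have "z \<in> D" and z_max: "\<And>y. y \<in> D \<Longrightarrow> y \<le> z"
      using Max_in[OF \<open>finite D\<close> False] Max_ge[OF \<open>finite D\<close>] unfolding z_def by auto
    then have "card (arm_moves z) = 2" and "z \<le> n - 2"
      unfolding D_def by auto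
    then obtain a b where z: "arm_moves z = {a, b}" "a < b"
      using card_2_ordered by blast
    have "D - {z} \<subseteq> {y. y < z \<and> on_arm (p (Suc a)) y}"
    proof
      fix y
      assume "y \<in> D - {z}"
      then have "y < z" and "y \<le> n - 2" and "card (arm_moves y) = 2"
        using z_max unfolding D_def by fastforce+
      then obtain a' b' where y: "arm_moves y = {a', b'}" "a' < b'"
        using card_2_ordered by blast
      have "a' < a" and "a < b'"
        using enters_in_order[OF \<open>y < z\<close> \<open>z \<le> n - 2\<close> y z]
          enters_before_leaving[OF \<open>y < z\<close> \<open>z \<le> n - 2\<close> y z] .
      moreover have "b' < J"
        using arm_moves_less_J[of b' y] y(1) by simp
      ultimately show "y \<in> {y. y < z \<and> on_arm (p (Suc a)) y}"
        using on_arm_between_moves[OF \<open>y \<le> n - 2\<close> y, of "Suc a"] \<open>y < z\<close> by simp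
    qed
    then have "card (D - {z}) \<le> arm_rank (p (Suc a)) z"
      unfolding arm_rank_def by (intro card_mono) simp_all
    also have "\<dots> \<le> m"
      using moving_node_rank_and_parent(1)[of a z] z(1) by simp
    finally show ?thesis
      using card_Suc_Diff1[OF \<open>finite D\<close> \<open>z \<in> D\<close>] by simp
  qed simp
qed

lemma length_lower_bound: "4 * (n - 1) \<le> J + 2 * (m + 1)"
proof -
  have "(2 + 2) * (n - 1) \<le> (\<Sum>x<n - 1. card (arm_moves x))
        + 2 * card {x. x < n - 1 \<and> card (arm_moves x) = 2}"
  proof (rule sum_lower_bound_with_exceptions)
    fix x
    assume "x < n - 1"
    then have "even (card (arm_moves x))" and "card (arm_moves x) \<noteq> 0"
      using even_card_arm_moves arm_moves_nonempty arm_moves_less_J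
      by (auto simp: card_eq_0_iff finite_subset[of _ "{..<J}"] subset_eq)
    then show "2 \<le> card (arm_moves x)"
      and "card (arm_moves x) \<noteq> 2 \<Longrightarrow> 2 + 2 \<le> card (arm_moves x)"
      by (auto elim!: evenE)
  qed
  then have "4 * (n - 1) \<le> (\<Sum>x<n - 1. card (arm_moves x))
        + 2 * card {x. x < n - 1 \<and> card (arm_moves x) = 2}"
    by simp
  also have "(\<Sum>x<n - 1. card (arm_moves x)) \<le> (\<Sum>x<n. card (arm_moves x))"
    by (rule sum_mono2) auto
  also have "\<dots> = J"
    using length_eq_sum_arm_moves by simp
  finally show ?thesis
    using card_arm_moves_two_le by simp
qed

end

lemma rra_path_length_bound:
  assumes "(rra_step m ^^ J) (hooked_vine n) (double_hooked_vine n)" and "3 \<le> n"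
  shows "4 * (n - 1) \<le> J + 2 * (m + 1)"
proof -
  obtain p where "p 0 = hooked_vine n" "p J = double_hooked_vine n"
    and "\<forall>i<J. rra_step m (p i) (p (Suc i))"
    using assms(1) relpowp_fun_conv by metis
  then interpret rotation_path m n J p
    using rra_step_arm_move assms(2) by unfold_locales auto
  show ?thesis by (rule length_lower_bound)
qed

theorem theorem3p10:
  fixes m n :: nat
  assumes "m \<ge> 1" and "n > m + 4"
  shows "\<exists>T1 T2. nodes T1 = n \<and> nodes T2 = n \<and> rra_defined m T1 T2
           \<and> rra_dist m T1 T2 \<ge> 4 * n - 4 * m - 4"
proof (intro exI conjI)
  show "nodes (hooked_vine n) = n" and "nodes (double_hooked_vine n) = n"
    using assms nodes_hooked_vine nodes_double_hooked_vine by simp_all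
  then show defined: "rra_defined m (hooked_vine n) (double_hooked_vine n)"
    using rra_defined_if_nodes_eq assms(1) by simp
  have "(rra_step m ^^ rra_dist m (hooked_vine n) (double_hooked_vine n))
          (hooked_vine n) (double_hooked_vine n)"
    using defined unfolding rra_defined_def rra_dist_def by (rule LeastI_ex)
  then have "4 * (n - 1) \<le> rra_dist m (hooked_vine n) (double_hooked_vine n) + 2 * (m + 1)"
    using rra_path_length_bound assms by simp
  then show "4 * n - 4 * m - 4 \<le> rra_dist m (hooked_vine n) (double_hooked_vine n)"
    using assms by arith
qed

end
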